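(* Let $H$ be a real Hilbert space and $\{C_\alpha\}_{\alpha\in\Omega}$ ($|\Omega|\ge2$) a family of closed convex subsets of $H$ whose intersection $C=\bigcap_\alpha C_\alpha$ is nonempty and has affine hull dense in $H$. Then for every starting element $x_0\in H$ and every sequence $\{t_n\}\subset[0,1]$ of weakness parameters, every sequence $\{x_n\}$ of remote projections onto $\{C_\alpha\}$ converges weakly.
   Context: $P_\alpha$ is the metric projection onto $C_\alpha$. A sequence of remote projections with weakness parameters $t_n\in[0,1]$ starting at $x_0$: $x_{n+1}=P_{\alpha(n)}x_n$, where $\alpha(n)\in\Omega$ is any index with $\mathrm{dist}(x_n,C_{\alpha(n)})\ge t_n\sup_\alpha\mathrm{dist}(x_n,C_\alpha)$; if $t_n=1$ for some $n$ it is required that $\max_\alpha\mathrm{dist}(x,C_\alpha)$ is attained for every $x\in H$. *)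

theory Defs
  imports "HOL-Analysis.Analysis"
begin

definition weakly_convergent :: "(nat \<Rightarrow> 'a::real_inner) \<Rightarrow> bool" where
  "weakly_convergent x \<longleftrightarrow> (\<exists>y. \<forall>z. (\<lambda>n. x n \<bullet> z) \<longlonglongrightarrow> y \<bullet> z)"

text \<open>Metric projection onto a set: the (unique, for closed convex nonempty sets in a
  Hilbert space) nearest point. The library closest_point needs heine_borel.\<close>
definition metric_proj :: "'a::real_inner set \<Rightarrow> 'a \<Rightarrow> 'a" where
  "metric_proj S a = (THE y. y \<in> S \<and> (\<forall>z\<in>S. dist a y \<le> dist a z))"

definition remote_projections ::
  "'i set \<Rightarrow> ('i \<Rightarrow> 'a::real_inner set) \<Rightarrow> (nat \<Rightarrow> real) \<Rightarrow> (nat \<Rightarrow> 'i) \<Rightarrow> (nat \<Rightarrow> 'a) \<Rightarrow> bool"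
where
  "remote_projections \<Omega> C t alpha x \<longleftrightarrow>
     (\<forall>n. alpha n \<in> \<Omega>
        \<and> infdist (x n) (C (alpha n)) \<ge> t n * (SUP \<beta>\<in>\<Omega>. infdist (x n) (C \<beta>))
        \<and> x (Suc n) = metric_proj (C (alpha n)) (x n))
   \<and> ((\<exists>n. t n = 1) \<longrightarrow> (\<forall>y. \<exists>\<beta>\<in>\<Omega>. \<forall>\<gamma>\<in>\<Omega>. infdist y (C \<gamma>) \<le> infdist y (C \<beta>)))"

end

theory Submission
  imports Defs
begin

(* Each step projects onto a closed convex set containing K = \<Inter>C\<^sub>\<alpha>, so dist x\<^sub>n c is
   nonincreasing for every c \<in> K (Fejer monotonicity). Hence (x\<^sub>n) is bounded and every
   (dist x\<^sub>n c)\<^sup>2 converges; by polarization so does \<langle>x\<^sub>n, d - c\<rangle> for c, d \<in> K. The vectors v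
   for which \<langle>x\<^sub>n, v\<rangle> converges form a linear subspace, closed because (x\<^sub>n) is bounded, and
   it contains K - c; since the affine hull of K is dense, it is the whole space. The limit
   functional is bounded linear, and its Riesz representative is the weak limit.
   Neither the remoteness of the chosen index nor |\<Omega>| \<ge> 2 is needed. *)

lemma dist_midpoint_parallelogram:
  fixes a u v :: "'a::real_inner"
  shows "(dist u v)\<^sup>2 = 2 * (dist a u)\<^sup>2 + 2 * (dist a v)\<^sup>2 - 4 * (dist a (midpoint u v))\<^sup>2"
  unfolding dist_norm power2_norm_eq_inner midpoint_def
  by (simp add: inner_commute algebra_simps)

lemma Cauchy_minimizing_sequence:
  fixes a :: "'a::real_inner"
  assumes "convex S" and zs: "\<And>k. zs k \<in> S" and lim: "(\<lambda>k. dist a (zs k)) \<longlonglongrightarrow> d"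
    and min: "\<And>z. z \<in> S \<Longrightarrow> d \<le> dist a z"
  shows "Cauchy zs"
proof (rule CauchyI)
  fix e :: real assume "0 < e"
  have d: "0 \<le> d" using LIMSEQ_le_const[OF lim, of 0] by simp
  have "(\<lambda>k. (dist a (zs k))\<^sup>2) \<longlonglongrightarrow> d\<^sup>2" by (intro tendsto_intros lim)
  moreover have "d\<^sup>2 < d\<^sup>2 + e\<^sup>2 / 4" using \<open>0 < e\<close> by simp
  ultimately have "eventually (\<lambda>k. (dist a (zs k))\<^sup>2 < d\<^sup>2 + e\<^sup>2 / 4) sequentially"
    by (rule order_tendstoD(2))
  then obtain N where N: "\<And>k. k \<ge> N \<Longrightarrow> (dist a (zs k))\<^sup>2 < d\<^sup>2 + e\<^sup>2 / 4"
    unfolding eventually_sequentially by blast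
  have "norm (zs m - zs n) < e" if "m \<ge> N" "n \<ge> N" for m n
  proof -
    have "midpoint (zs m) (zs n) \<in> S"
      using closed_segment_subset[OF zs zs \<open>convex S\<close>] midpoint_in_closed_segment by blast
    then have "d\<^sup>2 \<le> (dist a (midpoint (zs m) (zs n)))\<^sup>2" using min d by (simp add: power_mono)
    then have "(dist (zs m) (zs n))\<^sup>2 < e\<^sup>2"
      using dist_midpoint_parallelogram[of "zs m" "zs n" a] N[OF that(1)] N[OF that(2)] by linarith
    then show ?thesis using \<open>0 < e\<close> by (simp add: dist_norm power_less_imp_less_base)
  qed
  then show "\<exists>N. \<forall>m\<ge>N. \<forall>n\<ge>N. norm (zs m - zs n) < e" by blast
qed

lemma closest_point_exists_complete:
  fixes S :: "'a::{real_inner,complete_space} set"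
  assumes "closed S" "convex S" "S \<noteq> {}"
  shows "\<exists>p\<in>S. \<forall>z\<in>S. dist a p \<le> dist a z"
proof -
  have "infdist a S \<in> closure (dist a ` S)"
    unfolding infdist_notempty[OF \<open>S \<noteq> {}\<close>]
    by (rule closure_contains_Inf) (use \<open>S \<noteq> {}\<close> in \<open>auto intro: bdd_belowI[of _ 0]\<close>)
  then obtain ds where ds: "\<And>k. ds k \<in> dist a ` S" "ds \<longlonglongrightarrow> infdist a S"
    unfolding closure_sequential by blast
  then have "\<forall>k. \<exists>z. z \<in> S \<and> ds k = dist a z" by blast
  then obtain zs where zs: "\<And>k. zs k \<in> S" "\<And>k. ds k = dist a (zs k)"
    by metis
  have "ds = (\<lambda>k. dist a (zs k))" using zs(2) by (simp add: fun_eq_iff)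
  with ds(2) have lim: "(\<lambda>k. dist a (zs k)) \<longlonglongrightarrow> infdist a S" by simp
  have "Cauchy zs"
    using Cauchy_minimizing_sequence[OF \<open>convex S\<close> zs(1) lim] infdist_le by blast
  then obtain p where p: "zs \<longlonglongrightarrow> p" using Cauchy_convergent convergent_def by blast
  have "p \<in> S" using closed_sequentially[OF \<open>closed S\<close>] zs(1) p by blast
  moreover have "dist a p = infdist a S"
    using LIMSEQ_unique[OF tendsto_dist[OF tendsto_const p] lim] .
  then have "\<forall>z\<in>S. dist a p \<le> dist a z" by (auto intro: infdist_le)
  ultimately show ?thesis by blast
qed

lemma metric_proj_closest:
  fixes S :: "'a::{real_inner,complete_space} set"
  assumes "closed S" "convex S" "S \<noteq> {}"
  shows "metric_proj S a \<in> S \<and> (\<forall>z\<in>S. dist a (metric_proj S a) \<le> dist a z)"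
proof -
  obtain p where "p \<in> S" "\<forall>z\<in>S. dist a p \<le> dist a z"
    using closest_point_exists_complete[OF assms] by blast
  then have "\<exists>!p. p \<in> S \<and> (\<forall>z\<in>S. dist a p \<le> dist a z)"
    using any_closest_point_unique[OF \<open>convex S\<close> \<open>closed S\<close>] by blast
  then show ?thesis unfolding metric_proj_def by (rule theI')
qed

lemma metric_proj_inner_le:
  fixes S :: "'a::{real_inner,complete_space} set"
  assumes "closed S" "convex S" "z \<in> S"
  shows "(a - metric_proj S a) \<bullet> (z - metric_proj S a) \<le> 0"
  using metric_proj_closest[OF assms(1,2)] any_closest_point_dot[OF assms(2,1) _ assms(3)]
    assms(3) by blast

lemma dist_metric_proj_le:
  fixes S :: "'a::{real_inner,complete_space} set"
  assumes "closed S" "convex S" "c \<in> S"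
  shows "dist (metric_proj S a) c \<le> dist a c"
proof -
  define p where "p = metric_proj S a"
  have "(dist a c)\<^sup>2 = (dist a p)\<^sup>2 + (dist p c)\<^sup>2 - 2 * ((a - p) \<bullet> (c - p))"
    unfolding dist_norm power2_norm_eq_inner by (simp add: inner_commute algebra_simps)
  moreover have "(a - p) \<bullet> (c - p) \<le> 0" unfolding p_def by (rule metric_proj_inner_le[OF assms])
  ultimately have "(dist p c)\<^sup>2 \<le> (dist a c)\<^sup>2" using zero_le_power2[of "dist a p"] by linarith
  then show ?thesis unfolding p_def by (rule power2_le_imp_le) simp
qed

lemma Riesz_representation:
  fixes f :: "'a::{real_inner,complete_space} \<Rightarrow> real"
  assumes "bounded_linear f"
  shows "\<exists>y. \<forall>z. f z = y \<bullet> z"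
proof (cases "\<forall>z. f z = 0")
  case True
  then show ?thesis by (intro exI[of _ 0]) simp
next
  case False
  then obtain w where "f w \<noteq> 0" by blast
  interpret f: bounded_linear f by (rule assms)
  define N where "N = {z. f z = 0}"
  have "closed N" unfolding N_def by (intro closed_Collect_eq continuous_intros f.continuous_on)
  have "convex N" unfolding N_def convex_def by (simp add: f.add f.scale)
  define u where "u = w - metric_proj N w"
  have "0 \<in> N" unfolding N_def by (simp add: f.zero)
  then have "metric_proj N w \<in> N" using metric_proj_closest[OF \<open>closed N\<close> \<open>convex N\<close>] by blast
  then have fu: "f u = f w" unfolding u_def N_def by (simp add: f.diff)
  have orth: "u \<bullet> n = 0" if "n \<in> N" for n
  proof -
    have "metric_proj N w + n \<in> N" "metric_proj N w - n \<in> N"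
      using \<open>metric_proj N w \<in> N\<close> that unfolding N_def by (auto simp: f.add f.diff)
    from this[THEN metric_proj_inner_le[OF \<open>closed N\<close> \<open>convex N\<close>, of _ w]]
    show ?thesis unfolding u_def[symmetric] by (simp add: inner_diff_right)
  qed
  have "f z = ((f u / (u \<bullet> u)) *\<^sub>R u) \<bullet> z" for z
  proof -
    have "z - (f z / f u) *\<^sub>R u \<in> N"
      unfolding N_def using \<open>f w \<noteq> 0\<close> fu by (simp add: f.diff f.scale)
    from orth[OF this] have "u \<bullet> z = (f z / f u) * (u \<bullet> u)" by (simp add: inner_diff_right)
    moreover have "u \<bullet> u \<noteq> 0" using fu \<open>f w \<noteq> 0\<close> by (auto simp: f.zero)
    ultimately show ?thesis using \<open>f w \<noteq> 0\<close> fu by (simp add: field_simps)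
  qed
  then show ?thesis by blast
qed

lemma subspace_convergent_inner: "subspace {v. convergent (\<lambda>n. x n \<bullet> v)}"
proof -
  have "convergent (\<lambda>n. r * (x n \<bullet> v))" if "convergent (\<lambda>n. x n \<bullet> v)" for r v
    using that by (auto simp: convergent_def intro: tendsto_mult_left)
  then show ?thesis
    unfolding subspace_def by (simp add: inner_add_right convergent_add convergent_const)
qed

lemma closed_convergent_inner:
  fixes x :: "nat \<Rightarrow> 'a::real_inner"
  assumes "bounded (range x)"
  shows "closed {v. convergent (\<lambda>n. x n \<bullet> v)}" (is "closed ?V")
proof -
  obtain M where "M > 0" and M: "\<And>n. norm (x n) \<le> M"
    using assms by (auto simp: bounded_pos)
  have "Cauchy (\<lambda>n. x n \<bullet> v)" if "v \<in> closure ?V" for v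
  proof (rule CauchyI)
    fix e :: real assume "0 < e"
    then have "e / (3 * M) > 0" using \<open>M > 0\<close> by simp
    then obtain w where "w \<in> ?V" and w: "dist w v < e / (3 * M)"
      using \<open>v \<in> closure ?V\<close> unfolding closure_approachable by blast
    then have "Cauchy (\<lambda>n. x n \<bullet> w)" by (simp add: Cauchy_convergent_iff)
    moreover have "e / 3 > 0" using \<open>0 < e\<close> by simp
    ultimately obtain N where N: "\<forall>m\<ge>N. \<forall>n\<ge>N. norm (x m \<bullet> w - x n \<bullet> w) < e / 3"
      unfolding Cauchy_iff by blast
    have close: "\<bar>x m \<bullet> (v - w)\<bar> < e / 3" for m
    proof -
      have "\<bar>x m \<bullet> (v - w)\<bar> \<le> norm (x m) * norm (v - w)" by (rule Cauchy_Schwarz_ineq2)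
      also have "\<dots> \<le> M * dist w v"
        using M[of m] by (simp add: dist_norm norm_minus_commute mult_right_mono)
      also have "\<dots> < e / 3" using w \<open>M > 0\<close> by (simp add: field_simps)
      finally show ?thesis .
    qed
    have "norm (x m \<bullet> v - x n \<bullet> v) < e" if "m \<ge> N" "n \<ge> N" for m n
    proof -
      have "x m \<bullet> v - x n \<bullet> v = x m \<bullet> (v - w) + (x m \<bullet> w - x n \<bullet> w) - x n \<bullet> (v - w)"
        by (simp add: inner_diff_right)
      with N[rule_format, OF that] close[of m] close[of n] show ?thesis
        unfolding real_norm_def by linarith
    qed
    then show "\<exists>N. \<forall>m\<ge>N. \<forall>n\<ge>N. norm (x m \<bullet> v - x n \<bullet> v) < e" by blast
  qed
  then have "closure ?V \<subseteq> ?V" unfolding Cauchy_convergent_iff by blast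
  then show ?thesis by (simp only: closure_subset_eq)
qed

lemma weakly_convergentI:
  fixes x :: "nat \<Rightarrow> 'a::{real_inner,complete_space}"
  assumes "bounded (range x)" and conv: "\<And>z. convergent (\<lambda>n. x n \<bullet> z)"
  shows "weakly_convergent x"
proof -
  obtain M where M: "\<And>n. norm (x n) \<le> M"
    using assms by (auto simp: bounded_iff)
  define f where "f z = lim (\<lambda>n. x n \<bullet> z)" for z
  have f: "(\<lambda>n. x n \<bullet> z) \<longlonglongrightarrow> f z" for z
    unfolding f_def using conv convergent_LIMSEQ_iff by blast
  have "bounded_linear f"
  proof (rule bounded_linear_intro)
    show "f (u + v) = f u + f v" for u v
      using f[of "u + v"] tendsto_add[OF f f] by (simp add: inner_add_right LIMSEQ_unique)
    show "f (r *\<^sub>R u) = r *\<^sub>R f u" for r u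
      using f[of "r *\<^sub>R u"] tendsto_mult_left[OF f, of r] by (simp add: LIMSEQ_unique)
    show "norm (f u) \<le> norm u * M" for u
    proof (rule LIMSEQ_le_const2)
      show "(\<lambda>n. norm (x n \<bullet> u)) \<longlonglongrightarrow> norm (f u)" by (intro tendsto_intros f)
      have "norm (x n \<bullet> u) \<le> norm u * M" for n
      proof -
        have "norm (x n \<bullet> u) \<le> norm (x n) * norm u" using Cauchy_Schwarz_ineq2 by simp
        also have "\<dots> \<le> norm u * M"
          using mult_right_mono[OF M[of n] norm_ge_zero[of u]] by (simp add: mult.commute)
        finally show ?thesis .
      qed
      then show "\<exists>N. \<forall>n\<ge>N. norm (x n \<bullet> u) \<le> norm u * M" by blast
    qed
  qed
  then obtain y where "\<And>z. f z = y \<bullet> z" using Riesz_representation by blast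
  then have "\<forall>z. (\<lambda>n. x n \<bullet> z) \<longlonglongrightarrow> y \<bullet> z" using f by simp
  then show ?thesis unfolding weakly_convergent_def by blast
qed

lemma closed_subspace_eq_UNIV_if_dense_affine_hull:
  fixes V :: "'a::real_normed_vector set"
  assumes "subspace V" "closed V" "c \<in> K" and diff: "\<And>d. d \<in> K \<Longrightarrow> d - c \<in> V"
    and dense: "closure (affine hull K) = UNIV"
  shows "V = UNIV"
proof -
  have "span ((\<lambda>d. - c + d) ` (K - {c})) \<subseteq> V"
    using diff \<open>subspace V\<close> by (intro span_minimal) auto
  then have "affine hull K \<subseteq> (+) c ` V"
    using affine_hull_span2[OF \<open>c \<in> K\<close>] by auto
  then have "closure (affine hull K) \<subseteq> (+) c ` V"
    by (intro closure_minimal closed_translation \<open>closed V\<close>)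
  then have "c + w \<in> (+) c ` V" for w using dense by blast
  then have "w \<in> V" for w by (metis add_left_imp_eq imageE)
  then show ?thesis by blast
qed

lemma Fejer_monotone_weakly_convergent:
  fixes x :: "nat \<Rightarrow> 'a::{real_inner,complete_space}"
  assumes "K \<noteq> {}" "closure (affine hull K) = UNIV"
    and Fejer: "\<And>c n. c \<in> K \<Longrightarrow> dist (x (Suc n)) c \<le> dist (x n) c"
  shows "weakly_convergent x"
proof -
  have dec: "decseq (\<lambda>n. dist (x n) c)" if "c \<in> K" for c
    using Fejer[OF that] by (simp add: decseq_Suc_iff)
  have conv: "convergent (\<lambda>n. (dist (x n) c)\<^sup>2)" if c: "c \<in> K" for c
  proof -
    obtain L where "(\<lambda>n. dist (x n) c) \<longlonglongrightarrow> L"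
      using decseq_convergent[OF dec[OF c], of 0] by auto
    then have "(\<lambda>n. (dist (x n) c)\<^sup>2) \<longlonglongrightarrow> L\<^sup>2" by (intro tendsto_intros)
    then show ?thesis by (rule convergentI)
  qed
  obtain c where "c \<in> K" using \<open>K \<noteq> {}\<close> by blast
  have "range x \<subseteq> cball c (dist (x 0) c)"
    using dec[OF \<open>c \<in> K\<close>] by (auto simp: decseq_def dist_commute)
  then have "bounded (range x)" using bounded_cball bounded_subset by blast
  have "convergent (\<lambda>n. x n \<bullet> (d - c))" if "d \<in> K" for d
  proof -
    have "2 * (x n \<bullet> (d - c)) = (dist (x n) c)\<^sup>2 - (dist (x n) d)\<^sup>2 + (norm d)\<^sup>2 - (norm c)\<^sup>2" for n
      unfolding dist_norm power2_norm_eq_inner by (simp add: inner_commute algebra_simps)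
    moreover have "convergent (\<lambda>n. (dist (x n) c)\<^sup>2 - (dist (x n) d)\<^sup>2 + (norm d)\<^sup>2 - (norm c)\<^sup>2)"
      using conv[OF \<open>c \<in> K\<close>] conv[OF that]
      by (intro convergent_add convergent_diff convergent_const)
    ultimately have "convergent (\<lambda>n. 2 * (x n \<bullet> (d - c)))" by simp
    then show ?thesis by (simp add: convergent_mult_const_iff)
  qed
  then have "{v. convergent (\<lambda>n. x n \<bullet> v)} = UNIV"
    using closed_subspace_eq_UNIV_if_dense_affine_hull[OF subspace_convergent_inner closed_convergent_inner]
      \<open>bounded (range x)\<close> \<open>c \<in> K\<close> assms(2) by blast
  then show ?thesis using weakly_convergentI[OF \<open>bounded (range x)\<close>] by blast
qed

theorem mainTheorem7:
  fixes \<Omega> :: "'i set" and C :: "'i \<Rightarrow> 'a::{real_inner, complete_space} set"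
    and t :: "nat \<Rightarrow> real" and alpha :: "nat \<Rightarrow> 'i" and x :: "nat \<Rightarrow> 'a"
  assumes "\<exists>a\<in>\<Omega>. \<exists>b\<in>\<Omega>. a \<noteq> b"
    and "\<And>a. a \<in> \<Omega> \<Longrightarrow> closed (C a)"
    and "\<And>a. a \<in> \<Omega> \<Longrightarrow> convex (C a)"
    and "(\<Inter>a\<in>\<Omega>. C a) \<noteq> {}"
    and "closure (affine hull (\<Inter>a\<in>\<Omega>. C a)) = UNIV"
    and "\<And>n. t n \<in> {0..1}"
    and "remote_projections \<Omega> C t alpha x"
  shows "weakly_convergent x"
proof (rule Fejer_monotone_weakly_convergent[OF assms(4,5)])
  fix c n
  assume "c \<in> (\<Inter>a\<in>\<Omega>. C a)"
  moreover have "alpha n \<in> \<Omega>" and "x (Suc n) = metric_proj (C (alpha n)) (x n)"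
    using assms(7) unfolding remote_projections_def by blast+
  ultimately show "dist (x (Suc n)) c \<le> dist (x n) c"
    using dist_metric_proj_le[OF assms(2,3)] by auto
qed

end
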